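(* Let $f:2^{[n]}\to\mathbb{R}$ be submodular with $f(\emptyset)=0$. Let $x\in[0,1]^n$ and $d\in\mathbb{R}^n_{\ge 0}$, and let $S=\{i: d_i\neq 0\}$. If $y=x+d\in[0,1]^n$, then $g(y)_i\le g(x)_i$ for all $i\notin S$. If instead $y=x-d\in[0,1]^n$, then $g(y)_i\ge g(x)_i$ for all $i\notin S$.
   Context: Notation: $[n]=\{1,\dots,n\}$. For a permutation $P=(P_1,\dots,P_n)$ of $[n]$, write $P[j]=\{P_1,\dots,P_j\}$ for $0\le j\le n$ (so $P[0]=\emptyset$). For $x\in\mathbb{R}^n$, the permutation $P_x$ consistent with $x$ is the permutation with $x_{P_1}\ge x_{P_2}\ge\dots\ge x_{P_n}$, ties broken lexicographically (among equal coordinates, the smaller index comes first). The Lovász subgradient of $f$ at $x\in[0,1]^n$ is the vector $g(x)\in\mathbb{R}^n$ defined by $g(x)_{P_k}=f(P[k])-f(P[k-1])$ for $k\in[n]$, where $P=P_x$. *)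

theory Defs
  imports Complex_Main
begin

text \<open>Ground set [n] = {1..n}; vectors in R^n are functions nat => real,
  only the coordinates in {1..n} matter.  A permutation of [n] is a bijection
  P : {1..n} -> {1..n} (P k is the k-th entry P_k), extended by the identity
  outside {1..n}.\<close>

definition submodular :: "nat \<Rightarrow> (nat set \<Rightarrow> real) \<Rightarrow> bool" where
  "submodular n f \<longleftrightarrow>
     (\<forall>A B. A \<subseteq> {1..n} \<longrightarrow> B \<subseteq> {1..n} \<longrightarrow> f (A \<union> B) + f (A \<inter> B) \<le> f A + f B)"

definition consistent_perm :: "nat \<Rightarrow> (nat \<Rightarrow> real) \<Rightarrow> (nat \<Rightarrow> nat) \<Rightarrow> bool" where
  "consistent_perm n x P \<longleftrightarrow>
     bij_betw P {1..n} {1..n} \<and> (\<forall>k. k \<notin> {1..n} \<longrightarrow> P k = k) \<and>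
     (\<forall>k\<in>{1..n}. \<forall>l\<in>{1..n}. k < l \<longrightarrow>
        x (P k) > x (P l) \<or> (x (P k) = x (P l) \<and> P k < P l))"

definition perm_of :: "nat \<Rightarrow> (nat \<Rightarrow> real) \<Rightarrow> (nat \<Rightarrow> nat)" where
  "perm_of n x = (THE P. consistent_perm n x P)"

definition prefix :: "(nat \<Rightarrow> nat) \<Rightarrow> nat \<Rightarrow> nat set" where
  "prefix P j = P ` {1..j}"

definition lovasz_grad :: "nat \<Rightarrow> (nat set \<Rightarrow> real) \<Rightarrow> (nat \<Rightarrow> real) \<Rightarrow> nat \<Rightarrow> real" where
  "lovasz_grad n f x i =
     (let P = perm_of n x; k = (THE k. k \<in> {1..n} \<and> P k = i)
      in f (prefix P k) - f (prefix P (k - 1)))"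

end

theory Submission
  imports Defs
begin

text \<open>If i sits at position k of the order consistent with x, then P[k-1] is exactly the
  set T of coordinates preceding i in the order "larger value first, ties by smaller index", so
  g(x)_i = f (T \<union> {i}) - f T.  Raising the other coordinates while x_i stays fixed can only
  enlarge T, and by submodularity (diminishing returns) the marginal gain can only shrink;
  lowering them is the mirror image.\<close>

definition precedes :: "(nat \<Rightarrow> real) \<Rightarrow> nat \<Rightarrow> nat \<Rightarrow> bool" where
  "precedes x j i \<longleftrightarrow> x j > x i \<or> (x j = x i \<and> j < i)"

definition predecessors :: "nat \<Rightarrow> (nat \<Rightarrow> real) \<Rightarrow> nat \<Rightarrow> nat set" where
  "predecessors n x i = {j\<in>{1..n}. precedes x j i}"

lemma precedes_irrefl: "\<not> precedes x i i"
  by (auto simp: precedes_def)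

lemma precedes_asym: "precedes x i j \<Longrightarrow> \<not> precedes x j i"
  by (auto simp: precedes_def)

lemma precedes_trans: "precedes x a b \<Longrightarrow> precedes x b c \<Longrightarrow> precedes x a c"
  by (auto simp: precedes_def)

lemma precedes_total: "a \<noteq> b \<Longrightarrow> precedes x a b \<or> precedes x b a"
  by (auto simp: precedes_def)

lemma predecessors_subset: "predecessors n x i \<subseteq> {1..n}"
  by (auto simp: predecessors_def)

lemma not_in_predecessors: "i \<notin> predecessors n x i"
  by (simp add: predecessors_def precedes_irrefl)

lemma predecessors_mono:
  assumes "\<forall>j\<in>{1..n}. x j \<le> y j" and "x i = y i"
  shows "predecessors n x i \<subseteq> predecessors n y i"
  using assms by (force simp: predecessors_def precedes_def)

lemma consistent_perm_iff:
  "consistent_perm n x P \<longleftrightarrow>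
     bij_betw P {1..n} {1..n} \<and> (\<forall>k. k \<notin> {1..n} \<longrightarrow> P k = k) \<and>
     (\<forall>k\<in>{1..n}. \<forall>l\<in>{1..n}. k < l \<longrightarrow> precedes x (P k) (P l))"
  by (simp add: consistent_perm_def precedes_def)

lemma consistent_perm_prefix:
  assumes P: "consistent_perm n x P" and k: "k \<in> {1..n}"
  shows "prefix P (k - 1) = predecessors n x (P k)"
proof
  have bij: "bij_betw P {1..n} {1..n}"
    and ord: "\<forall>k\<in>{1..n}. \<forall>l\<in>{1..n}. k < l \<longrightarrow> precedes x (P k) (P l)"
    using P by (auto simp: consistent_perm_iff)
  show "prefix P (k - 1) \<subseteq> predecessors n x (P k)"
  proof
    fix j assume "j \<in> prefix P (k - 1)"
    then obtain m where "m \<in> {1..k - 1}" "j = P m"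
      by (auto simp: prefix_def)
    then show "j \<in> predecessors n x (P k)"
      using ord k bij by (auto simp: predecessors_def bij_betw_def)
  qed
  show "predecessors n x (P k) \<subseteq> prefix P (k - 1)"
  proof
    fix j assume j: "j \<in> predecessors n x (P k)"
    then have "j \<in> P ` {1..n}"
      using bij by (simp add: predecessors_def bij_betw_def)
    then obtain m where m: "m \<in> {1..n}" "j = P m" by blast
    have "\<not> k \<le> m"
    proof
      assume "k \<le> m"
      then have "P k = P m \<or> precedes x (P k) (P m)"
        using ord k m(1) by (cases "k = m") auto
      then show False
        using j m(2) precedes_irrefl precedes_asym by (auto simp: predecessors_def)
    qed
    then show "j \<in> prefix P (k - 1)"
      using m by (auto simp: prefix_def)
  qed
qed

lemma consistent_perm_card_predecessors:
  assumes P: "consistent_perm n x P" and k: "k \<in> {1..n}"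
  shows "card (predecessors n x (P k)) = k - 1"
proof -
  have "inj_on P {1..k - 1}"
    using P k by (auto simp: consistent_perm_iff bij_betw_def elim!: inj_on_subset)
  then have "card (prefix P (k - 1)) = k - 1"
    by (simp add: prefix_def card_image)
  then show ?thesis
    using consistent_perm_prefix[OF P k] by simp
qed

lemma consistent_perm_unique:
  assumes P: "consistent_perm n x P" and Q: "consistent_perm n x Q"
  shows "P = Q"
proof
  fix k
  show "P k = Q k"
  proof (cases "k \<in> {1..n}")
    case False
    then show ?thesis using P Q by (simp add: consistent_perm_iff)
  next
    case True
    have "Q k \<in> P ` {1..n}"
      using P Q True by (auto simp: consistent_perm_iff bij_betw_def)
    then obtain m where m: "m \<in> {1..n}" "Q k = P m" by blast
    have "m - 1 = k - 1"
      using consistent_perm_card_predecessors[OF P m(1)]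
        consistent_perm_card_predecessors[OF Q True] m(2) by simp
    then have "m = k"
      using m(1) True by auto
    then show ?thesis
      using m(2) by simp
  qed
qed

definition rank :: "nat \<Rightarrow> (nat \<Rightarrow> real) \<Rightarrow> nat \<Rightarrow> nat" where
  "rank n x j = card (predecessors n x j) + 1"

lemma rank_less:
  assumes "j \<in> {1..n}" and "precedes x j l"
  shows "rank n x j < rank n x l"
proof -
  have "predecessors n x j \<subset> predecessors n x l"
    using assms precedes_trans[of x _ j l] precedes_irrefl[of x j]
    unfolding predecessors_def by blast
  moreover have "finite (predecessors n x l)"
    by (simp add: predecessors_def)
  ultimately show ?thesis
    by (simp add: rank_def psubset_card_mono)
qed

lemma bij_betw_rank: "bij_betw (rank n x) {1..n} {1..n}"
proof -
  have "rank n x ` {1..n} \<subseteq> {1..n}"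
  proof (rule image_subsetI)
    fix j assume "j \<in> {1..n}"
    have "predecessors n x j \<subseteq> {1..n} - {j}"
      using predecessors_subset not_in_predecessors by blast
    then have "card (predecessors n x j) \<le> card ({1..n} - {j})"
      by (intro card_mono) auto
    then show "rank n x j \<in> {1..n}"
      using \<open>j \<in> {1..n}\<close> by (auto simp: rank_def)
  qed
  moreover have inj: "inj_on (rank n x) {1..n}"
  proof (rule inj_onI, rule ccontr)
    fix j l assume "j \<in> {1..n}" "l \<in> {1..n}" "rank n x j = rank n x l" "j \<noteq> l"
    then show False
      using precedes_total[of j l x] rank_less by force
  qed
  ultimately have "rank n x ` {1..n} = {1..n}"
    by (simp add: endo_inj_surj)
  with inj show ?thesis
    by (simp add: bij_betw_def)
qed

text \<open>The consistent permutation is the inverse of the rank function.\<close>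
lemma consistent_perm_exists: "\<exists>P. consistent_perm n x P"
proof -
  let ?r = "rank n x"
  define P where "P k = (if k \<in> {1..n} then the_inv_into {1..n} ?r k else k)" for k
  have P_bij: "bij_betw P {1..n} {1..n}"
    using bij_betw_the_inv_into[OF bij_betw_rank]
    by (rule bij_betw_cong[THEN iffD1, rotated]) (simp add: P_def)
  have rank_P: "?r (P k) = k" if "k \<in> {1..n}" for k
    using that f_the_inv_into_f_bij_betw[OF bij_betw_rank] by (simp add: P_def)
  have P_outside: "P k = k" if "k \<notin> {1..n}" for k
    using that by (auto simp: P_def)
  have "precedes x (P k) (P l)" if "k \<in> {1..n}" "l \<in> {1..n}" "k < l" for k l
  proof -
    have "P l \<in> {1..n}"
      using bij_betw_apply[OF P_bij that(2)] .
    have "P k \<noteq> P l"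
      using rank_P that by (metis less_irrefl)
    moreover have "\<not> precedes x (P l) (P k)"
    proof
      assume "precedes x (P l) (P k)"
      then have "?r (P l) < ?r (P k)"
        by (rule rank_less[OF \<open>P l \<in> {1..n}\<close>])
      then show False
        using rank_P that by simp
    qed
    ultimately show ?thesis
      using precedes_total by blast
  qed
  then have "consistent_perm n x P"
    using P_bij P_outside by (simp add: consistent_perm_iff)
  then show ?thesis by blast
qed

lemma consistent_perm_perm_of: "consistent_perm n x (perm_of n x)"
proof -
  have "\<exists>!P. consistent_perm n x P"
    using consistent_perm_exists consistent_perm_unique by blast
  then show ?thesis
    unfolding perm_of_def by (rule theI')
qed

lemma lovasz_grad_eq_marginal:
  assumes i: "i \<in> {1..n}"
  shows "lovasz_grad n f x i = f (insert i (predecessors n x i)) - f (predecessors n x i)"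
proof -
  define P where "P = perm_of n x"
  have P: "consistent_perm n x P"
    using consistent_perm_perm_of P_def by simp
  then have bij: "bij_betw P {1..n} {1..n}"
    by (simp add: consistent_perm_iff)
  then obtain k where k: "k \<in> {1..n}" "P k = i"
    using i by (metis bij_betw_imp_surj_on imageE)
  have "(THE k. k \<in> {1..n} \<and> P k = i) = k"
  proof (rule the_equality)
    show "k \<in> {1..n} \<and> P k = i"
      using k by simp
  next
    fix m assume "m \<in> {1..n} \<and> P m = i"
    then show "m = k"
      using k bij by (metis bij_betw_def inj_on_def)
  qed
  then have "lovasz_grad n f x i = f (prefix P k) - f (prefix P (k - 1))"
    by (simp add: lovasz_grad_def Let_def P_def)
  moreover have "{1..k} = insert k {1..k - 1}"
    using k by auto
  then have "prefix P k = insert i (prefix P (k - 1))"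
    using k by (simp add: prefix_def)
  moreover have "prefix P (k - 1) = predecessors n x i"
    using consistent_perm_prefix[OF P k(1)] k(2) by simp
  ultimately show ?thesis by simp
qed

lemma submodular_diminishing_returns:
  assumes f: "submodular n f" and "A \<subseteq> B" "B \<subseteq> {1..n}" "i \<in> {1..n}" "i \<notin> B"
  shows "f (insert i B) - f B \<le> f (insert i A) - f A"
proof -
  have "insert i A \<subseteq> {1..n}"
    using assms(2-4) by blast
  then have "f (insert i A \<union> B) + f (insert i A \<inter> B) \<le> f (insert i A) + f B"
    using f assms(3) unfolding submodular_def by blast
  moreover have "insert i A \<union> B = insert i B" "insert i A \<inter> B = A"
    using assms(2-5) by auto
  ultimately show ?thesis by simp
qed

lemma lovasz_grad_antimono:
  assumes f: "submodular n f" and i: "i \<in> {1..n}"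
    and le: "\<forall>j\<in>{1..n}. x j \<le> y j" and eq: "x i = y i"
  shows "lovasz_grad n f y i \<le> lovasz_grad n f x i"
  unfolding lovasz_grad_eq_marginal[OF i]
  by (rule submodular_diminishing_returns[OF f predecessors_mono[OF le eq]
        predecessors_subset i not_in_predecessors])

theorem lemma3p3:
  fixes n :: nat and f :: "nat set \<Rightarrow> real" and x d :: "nat \<Rightarrow> real"
  assumes "submodular n f" and "f {} = 0"
    and "\<forall>i\<in>{1..n}. 0 \<le> x i \<and> x i \<le> 1"
    and "\<forall>i\<in>{1..n}. 0 \<le> d i"
  defines "S \<equiv> {i\<in>{1..n}. d i \<noteq> 0}"
  shows "((\<forall>i\<in>{1..n}. 0 \<le> x i + d i \<and> x i + d i \<le> 1) \<longrightarrow>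
            (\<forall>i\<in>{1..n} - S. lovasz_grad n f (\<lambda>j. x j + d j) i \<le> lovasz_grad n f x i))
       \<and> ((\<forall>i\<in>{1..n}. 0 \<le> x i - d i \<and> x i - d i \<le> 1) \<longrightarrow>
            (\<forall>i\<in>{1..n} - S. lovasz_grad n f (\<lambda>j. x j - d j) i \<ge> lovasz_grad n f x i))"
proof (intro conjI impI ballI)
  fix i assume "i \<in> {1..n} - S"
  then have i: "i \<in> {1..n}" and "d i = 0"
    by (auto simp: S_def)
  then show "lovasz_grad n f (\<lambda>j. x j + d j) i \<le> lovasz_grad n f x i"
    using assms(4) by (intro lovasz_grad_antimono[OF assms(1) i]) auto
next
  fix i assume "i \<in> {1..n} - S"
  then have i: "i \<in> {1..n}" and "d i = 0"
    by (auto simp: S_def)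
  then show "lovasz_grad n f (\<lambda>j. x j - d j) i \<ge> lovasz_grad n f x i"
    using assms(4) by (intro lovasz_grad_antimono[OF assms(1) i]) auto
qed

end
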